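(* Let $\mathcal{E}_2$ be the genus-$2$ Goeritz group of the $3$-sphere acting on $H_1(\Sigma_2)=H_1(\Sigma_2;\mathbb{Z})$. Then the coinvariant module vanishes: \[ H_1(\Sigma_2)_{\mathcal{E}_2} = 0 . \]
   Context: Let $S^3=H_2\cup H_2^*$ be a genus-$2$ Heegaard splitting with Heegaard surface $\Sigma_2=\partial H_2$. The genus-$2$ Goeritz group $\mathcal{E}_2$ is the group of isotopy classes $[f]$ of orientation-preserving homeomorphisms of $\Sigma_2$ for which there is an orientation-preserving self-homeomorphism $F$ of $S^3$ with $F(H_2)=H_2$ and $[F|_{\Sigma_2}]=[f]$; it acts on $H_1(\Sigma_2;\mathbb{Z})$ by induced maps. Fix a basis $x_1,x_2,y_1,y_2$ of $H_1(\Sigma_2;\mathbb{Z})$ (with $x_i$ meridian-type and $y_i$ longitude-type classes, $x_i\cdot y_i=1$). $\mathcal{E}_2$ is generated by four elements $\alpha,\beta,\gamma,\delta$ acting as follows: $\alpha_*(x_i)=-x_i$, $\alpha_*(y_i)=-y_i$ ($i=1,2$); $\beta_*(x_1)=x_1$, $\beta_*(x_2)=-x_2$, $\beta_*(y_1)=y_1$, $\beta_*(y_2)=-y_2$; $\gamma_*(x_1)=-x_2$, $\gamma_*(x_2)=-x_1$, $\gamma_*(y_1)=-y_2$, $\gamma_*(y_2)=-y_1$; $\delta_*(x_1)=-x_1+x_2$, $\delta_*(x_2)=-x_1$, $\delta_*(y_1)=y_2$, $\delta_*(y_2)=-y_1-y_2$. For a group $G$ and a left $G$-module $N$, the coinvariant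 module $N_G$ is the quotient of $N$ by the subgroup generated by $\{gn-n : g\in G,\ n\in N\}$. *)

theory Defs
  imports "HOL-Analysis.Analysis"
begin

text \<open>H_1(Sigma_2; Z) = Z^4 with coordinates w.r.t. the basis x1, x2, y1, y2
  (coordinate 1 = x1, 2 = x2, 3 = y1, 4 = y2).\<close>
type_synonym H1 = "int ^ 4"

definition alpha_act :: "H1 \<Rightarrow> H1" where
  "alpha_act v = vector [- (v$1), - (v$2), - (v$3), - (v$4)]"

definition beta_act :: "H1 \<Rightarrow> H1" where
  "beta_act v = vector [v$1, - (v$2), v$3, - (v$4)]"

definition gamma_act :: "H1 \<Rightarrow> H1" where
  "gamma_act v = vector [- (v$2), - (v$1), - (v$4), - (v$3)]"

text \<open>delta: x1 -> -x1+x2, x2 -> -x1, y1 -> y2, y2 -> -y1-y2, hence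
  a x1 + b x2 + c y1 + d y2 |-> (-a-b) x1 + a x2 - d y1 + (c-d) y2.\<close>
definition delta_act :: "H1 \<Rightarrow> H1" where
  "delta_act v = vector [- (v$1) - v$2, v$1, - (v$4), v$3 - v$4]"

definition goeritz_gens :: "(H1 \<Rightarrow> H1) set" where
  "goeritz_gens = {alpha_act, beta_act, gamma_act, delta_act}"

text \<open>The image of the Goeritz group E_2 in Aut(H_1): the group generated by the
  four generator actions (closed under composition with generators and their inverses).\<close>
inductive_set goeritz_image :: "(H1 \<Rightarrow> H1) set" where
  id_in: "id \<in> goeritz_image"
| gen_comp: "s \<in> goeritz_gens \<Longrightarrow> g \<in> goeritz_image \<Longrightarrow> s \<circ> g \<in> goeritz_image"
| inv_comp: "s \<in> goeritz_gens \<Longrightarrow> g \<in> goeritz_image \<Longrightarrow> inv s \<circ> g \<in> goeritz_image"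

inductive_set coinv_relations :: "H1 set" where
  rel: "g \<in> goeritz_image \<Longrightarrow> g n - n \<in> coinv_relations"
| zero: "0 \<in> coinv_relations"
| add: "a \<in> coinv_relations \<Longrightarrow> b \<in> coinv_relations \<Longrightarrow> a + b \<in> coinv_relations"
| neg: "a \<in> coinv_relations \<Longrightarrow> - a \<in> coinv_relations"

end

theory Submission
  imports Defs
begin

text \<open>The relations of the coinvariant module contain -2v (alpha acts as -1) and 3v for
  every v: delta minus the identity has determinant 3 on both the x-block and the y-block, so
  applying it to the adjugate image of v gives 3v. Adding the two relations gives v.\<close>

lemma vec4_eq_iff: "(v::'a^4) = w \<longleftrightarrow> v$1 = w$1 \<and> v$2 = w$2 \<and> v$3 = w$3 \<and> v$4 = w$4"
  by (metis (mono_tags) exhaust_4 vec_eq_iff)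

lemma vector_4_nth [simp]:
  "(vector [a, b, c, d] :: 'a::zero^4)$1 = a"
  "(vector [a, b, c, d] :: 'a::zero^4)$2 = b"
  "(vector [a, b, c, d] :: 'a::zero^4)$3 = c"
  "(vector [a, b, c, d] :: 'a::zero^4)$4 = d"
  unfolding vector_def by simp_all

lemma goeritz_gens_in_image: "s \<in> goeritz_gens \<Longrightarrow> s \<in> goeritz_image"
  using goeritz_image.gen_comp[OF _ goeritz_image.id_in] by simp

lemma goeritz_gen_displacement_in_coinv_relations:
  "s \<in> goeritz_gens \<Longrightarrow> s n - n \<in> coinv_relations"
  by (rule coinv_relations.rel[OF goeritz_gens_in_image])

lemma alpha_act_displacement: "alpha_act v - v = (-2) *s v"
  by (simp add: alpha_act_def vec4_eq_iff)

lemma delta_act_displacement_adjugate: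
  "delta_act w - w = 3 *s v"
  if "w = vector [v$2 - v$1, - v$1 - 2 * v$2, v$4 - 2 * v$3, - v$3 - v$4]"
  using that by (simp add: delta_act_def vec4_eq_iff)

theorem lemma2p1:
  shows "coinv_relations = (UNIV :: H1 set)"
proof -
  have "v \<in> coinv_relations" for v :: H1
  proof -
    define w :: H1 where "w = vector [v$2 - v$1, - v$1 - 2 * v$2, v$4 - 2 * v$3, - v$3 - v$4]"
    have "v = (delta_act w - w) + (alpha_act v - v)"
      by (simp add: delta_act_displacement_adjugate[OF w_def] alpha_act_displacement vec4_eq_iff)
    moreover have "delta_act w - w \<in> coinv_relations" "alpha_act v - v \<in> coinv_relations"
      by (simp_all add: goeritz_gen_displacement_in_coinv_relations goeritz_gens_def)
    ultimately show ?thesis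
      by (metis coinv_relations.add)
  qed
  then show ?thesis
    by auto
qed

end
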